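(* Let $\Gamma$ be an infinite group generated by a finite set $X$ and let $\pi:\mathbb F_X\to\Gamma$ be the canonical projection. Then $\overline\mu(\ker\pi)=0$; equivalently, $\ker\pi$ is LB-negligible.
   Context: $\mathbb F_X$ is the free group on $X$, $|\omega|$ the reduced word length, $B_n=\{\omega\in\mathbb F_X:|\omega|\le n\}$. For $S\subset\mathbb F_X$, $\overline\mu(S)=\limsup_{n\to\infty}\max_{\omega\in\mathbb F_X}\frac{|S\cap\omega B_n|}{|B_n|}$ and $\underline\mu(S)=\liminf_{n\to\infty}\min_{\omega\in\mathbb F_X}\frac{|S\cap\omega B_n|}{|B_n|}$. A set is LB-generic if $\underline\mu=1$, and $N$ is LB-negligible if its complement is LB-generic, i.e. $\overline\mu(N)=0$. *)

theory Defs
  imports "HOL-Algebra.Generated_Groups" "HOL-Library.Liminf_Limsup" "HOL-Library.Extended_Real"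
begin

text \<open>Free group on a set X of letters: elements are reduced words, i.e. lists of
  signed letters (True, x) = x and (False, x) = x inverse, with no adjacent cancelling pair.\<close>

type_synonym 'a fword = "(bool \<times> 'a) list"

definition cancels :: "bool \<times> 'a \<Rightarrow> bool \<times> 'a \<Rightarrow> bool" where
  "cancels a b \<longleftrightarrow> fst a \<noteq> fst b \<and> snd a = snd b"

fun reduced :: "'a fword \<Rightarrow> bool" where
  "reduced [] = True"
| "reduced [a] = True"
| "reduced (a # b # w) = (\<not> cancels a b \<and> reduced (b # w))"

definition push :: "'a fword \<Rightarrow> bool \<times> 'a \<Rightarrow> 'a fword" where
  "push w a = (if w \<noteq> [] \<and> cancels (last w) a then butlast w else w @ [a])"

definition normalize :: "'a fword \<Rightarrow> 'a fword" where
  "normalize w = foldl push [] w"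

definition fmult :: "'a fword \<Rightarrow> 'a fword \<Rightarrow> 'a fword" where
  "fmult u v = normalize (u @ v)"

definition free_words :: "'a set \<Rightarrow> 'a fword set" where
  "free_words X = {w. reduced w \<and> snd ` set w \<subseteq> X}"

definition fball :: "'a set \<Rightarrow> nat \<Rightarrow> 'a fword set" where
  "fball X n = {w \<in> free_words X. length w \<le> n}"

definition upper_density :: "'a set \<Rightarrow> 'a fword set \<Rightarrow> ereal" where
  "upper_density X S = limsup (\<lambda>n. SUP \<omega>\<in>free_words X.
      ereal (real (card (S \<inter> fmult \<omega> ` fball X n)) / real (card (fball X n))))"

definition proj :: "('a, 'b) monoid_scheme \<Rightarrow> 'a fword \<Rightarrow> 'a" where
  "proj G w = foldr (\<lambda>(b, x) acc. (if b then x else inv\<^bsub>G\<^esub> x) \<otimes>\<^bsub>G\<^esub> acc) w \<one>\<^bsub>G\<^esub>"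

definition proj_kernel :: "('a, 'b) monoid_scheme \<Rightarrow> 'a set \<Rightarrow> 'a fword set" where
  "proj_kernel G X = {w \<in> free_words X. proj G w = \<one>\<^bsub>G\<^esub>}"

end

theory Submission
  imports Defs "HOL-Algebra.Multiplicative_Group"
begin

(*
  Let c_n(a, h) be the number of reduced words of length n that may follow the letter a and
  represent h, and q = 2|X| - 1, so that there are q^n such words in all.  Since c_(n+1)(a, h) is
  a sum of q values c_n(b, -), the peak density max c_n / q^n decreases to some limit d.
  Suppose d > 0 and |X| >= 2, and take a count at level m + j close to the peak.  Every
  summand of the recursion is then close to the peak as well, so every word t of length j
  following a continues into about d q^m words representing an element determined by pi(t).
  These sets are disjoint for distinct values of pi(t), hence pi takes at most 4|X|/d values on
  the words of length j following a.  In an infinite group this is impossible: bounded images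
  of such words give bounded images of spheres, which force every generator to have finite
  order, and then padding words with powers of their first letter makes the whole image
  finite.  So fibers of pi have vanishing density in spheres and hence in balls; for |X| = 1,
  pi is injective on reduced words.  Finally, the kernel meets a translate of B_n in at most as
  many words as a single fiber of pi in B_n.
*)

lemma finite_UN_incseq_card_bounded:
  fixes A :: "nat \<Rightarrow> 'a set"
  assumes "incseq A" "\<And>n. finite (A n)" "\<And>n. card (A n) \<le> C"
  shows "finite (\<Union>n. A n)"
proof (rule ccontr)
  assume "infinite (\<Union>n. A n)"
  then obtain F where F: "F \<subseteq> (\<Union>n. A n)" "finite F" "card F = Suc C"
    by (meson infinite_arbitrarily_large)
  have "A i \<subseteq> A j \<or> A j \<subseteq> A i" for i j
    using monoD[OF assms(1)] nat_le_linear by blast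
  then have "subset.chain UNIV (range A)"
    unfolding subset.chain_def by blast
  then obtain n where "F \<subseteq> A n"
    using finite_subset_Union_chain[OF F(2) F(1)] by blast
  then have "card F \<le> C"
    using card_mono[OF assms(2)] assms(3) order_trans by metis
  with F(3) show False
    by simp
qed

lemma sum_near_max_imp_term_ge:
  fixes f :: "'a \<Rightarrow> real"
  assumes "finite B" "b \<in> B" "\<And>x. x \<in> B \<Longrightarrow> f x \<le> U" "real (card B) * U - \<gamma> \<le> sum f B"
  shows "U - \<gamma> \<le> f b"
proof -
  have "sum f B = f b + sum f (B - {b})"
    using assms(1,2) by (simp add: sum.remove)
  moreover have "sum f (B - {b}) \<le> real (card (B - {b})) * U"
    using assms(3) sum_bounded_above[of "B - {b}" f U] by simp
  moreover have "1 \<le> card B"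
    using assms(1,2) by (auto simp: Suc_le_eq card_gt_0_iff)
  then have "real (card (B - {b})) = real (card B) - 1"
    using assms(1,2) by (simp add: of_nat_diff card_Diff_singleton)
  ultimately show ?thesis
    using assms(4) by (simp add: left_diff_distrib)
qed

lemma limsup_eq_0_if_eventually_le:
  fixes f :: "nat \<Rightarrow> ereal"
  assumes "\<And>n. 0 \<le> f n" "\<And>\<epsilon>. 0 < \<epsilon> \<Longrightarrow> eventually (\<lambda>n. f n \<le> ereal \<epsilon>) sequentially"
  shows "limsup f = 0"
proof (rule antisym)
  show "limsup f \<le> 0"
  proof (rule ereal_le_epsilon2)
    fix \<epsilon> :: real assume "0 < \<epsilon>"
    then show "limsup f \<le> 0 + ereal \<epsilon>"
      using Limsup_bounded[OF assms(2)] by simp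
  qed
  have "0 \<le> liminf f"
    by (rule Liminf_bounded) (simp add: assms(1))
  also have "\<dots> \<le> limsup f"
    by (rule Liminf_le_Limsup) simp
  finally show "0 \<le> limsup f" .
qed

lemma (in group) finite_range_pow_if_torsion:
  assumes "a \<in> carrier G" "0 < p" "a [^] (p::nat) = \<one>"
  shows "finite (range (\<lambda>s::nat. a [^] s))"
proof -
  have "ord a \<noteq> 0"
    using assms ord_eq_0 by auto
  then have "range (\<lambda>s::nat. a [^] s) = (\<lambda>s. a [^] s) ` {0..ord a - 1}"
    using ord_elems_inf_carrier[OF assms(1)] by (auto simp: full_SetCompr_eq[symmetric])
  then show ?thesis
    by simp
qed

section \<open>Reduced words\<close>

definition letters :: "'a set \<Rightarrow> (bool \<times> 'a) set" where
  "letters X = UNIV \<times> X"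

definition letter_val :: "('a, 'b) monoid_scheme \<Rightarrow> bool \<times> 'a \<Rightarrow> 'a" where
  "letter_val G a = (if fst a then snd a else inv\<^bsub>G\<^esub> snd a)"

lemma proj_Nil [simp]: "proj G [] = \<one>\<^bsub>G\<^esub>"
  by (simp add: proj_def)

lemma proj_Cons [simp]: "proj G (a # w) = letter_val G a \<otimes>\<^bsub>G\<^esub> proj G w"
  by (cases a) (simp add: proj_def letter_val_def)

lemma finite_letters: "finite X \<Longrightarrow> finite (letters X)"
  by (simp add: letters_def)

lemma card_letters: "finite X \<Longrightarrow> card (letters X) = 2 * card X"
  by (simp add: letters_def card_cartesian_product)

lemma cancels_iff: "cancels a b \<longleftrightarrow> b = (\<not> fst a, snd a)"
  by (cases a; cases b) (auto simp: cancels_def)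

lemma reduced_Cons: "reduced (a # w) \<longleftrightarrow> reduced w \<and> (w = [] \<or> \<not> cancels a (hd w))"
  by (cases w) auto

lemma reduced_append:
  "reduced (u @ v) \<longleftrightarrow> reduced u \<and> reduced v \<and> (u = [] \<or> v = [] \<or> \<not> cancels (last u) (hd v))"
  by (induction u rule: reduced.induct) (auto simp: reduced_Cons)

lemma reduced_butlast: "reduced w \<Longrightarrow> reduced (butlast w)"
  by (induction w rule: reduced.induct) (auto simp: reduced_Cons)

lemma reduced_replicate_append:
  assumes "reduced w" "w = [] \<or> hd w = a"
  shows "reduced (replicate r a @ w)"
  using assms by (induction r) (auto simp: reduced_Cons cancels_def hd_append)

lemma free_words_iff: "w \<in> free_words X \<longleftrightarrow> reduced w \<and> set w \<subseteq> letters X"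
  by (auto simp: free_words_def letters_def)

lemma free_words_Nil [simp]: "[] \<in> free_words X"
  by (simp add: free_words_def)

lemma replicate_in_free_words: "a \<in> letters X \<Longrightarrow> replicate r a \<in> free_words X"
  using reduced_replicate_append[of "[]" a r] by (auto simp: free_words_iff)

lemma set_push: "set (push w a) \<subseteq> insert a (set w)"
  by (auto simp: push_def dest: in_set_butlastD)

lemma reduced_push: "reduced w \<Longrightarrow> reduced (push w a)"
  by (cases "w = []") (auto simp: push_def reduced_append reduced_butlast)

lemma normalize_in_free_words: "set w \<subseteq> letters X \<Longrightarrow> normalize w \<in> free_words X"
proof -
  have "reduced (foldl push u w) \<and> set (foldl push u w) \<subseteq> set u \<union> set w" if "reduced u" for u
    using that
  proof (induction w arbitrary: u)
    case (Cons a w)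
    have "reduced (push u a)"
      using Cons.prems by (rule reduced_push)
    from Cons.IH[OF this] show ?case
      using set_push[of u a] by auto
  qed simp
  from this[of "[]"] show "set w \<subseteq> letters X \<Longrightarrow> normalize w \<in> free_words X"
    by (auto simp: normalize_def free_words_iff)
qed

lemma free_words_singleton: "w \<in> free_words {x} \<Longrightarrow> \<exists>b. w = replicate (length w) (b, x)"
proof (induction w)
  case (Cons a w)
  then obtain c where a: "a = (c, x)"
    by (cases a) (auto simp: free_words_iff letters_def)
  have "w \<in> free_words {x}"
    using Cons.prems by (auto simp: free_words_iff reduced_Cons)
  then obtain b where w: "w = replicate (length w) (b, x)"
    using Cons.IH by blast
  have "w = [] \<or> \<not> cancels a (hd w)"
    using Cons.prems by (simp add: free_words_iff reduced_Cons)
  then have "w = [] \<or> b = c"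
    using w a by (cases "length w") (auto simp: cancels_def)
  then show ?case
    using w a by (intro exI[of _ c]) auto
qed simp

section \<open>Spheres, balls and followers\<close>

definition fsphere :: "'a set \<Rightarrow> nat \<Rightarrow> 'a fword set" where
  "fsphere X n = {w \<in> free_words X. length w = n}"

definition next_letters :: "'a set \<Rightarrow> bool \<times> 'a \<Rightarrow> (bool \<times> 'a) set" where
  "next_letters X a = {b \<in> letters X. \<not> cancels a b}"

definition followers :: "'a set \<Rightarrow> nat \<Rightarrow> bool \<times> 'a \<Rightarrow> 'a fword set" where
  "followers X n a = {w \<in> fsphere X n. w = [] \<or> \<not> cancels a (hd w)}"

lemma followers_subset_fsphere: "followers X n a \<subseteq> fsphere X n"
  by (auto simp: followers_def)

lemma set_subset_letters_if_fsphere: "w \<in> fsphere X n \<Longrightarrow> set w \<subseteq> letters X"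
  by (simp add: fsphere_def free_words_iff)

lemma finite_fsphere: "finite X \<Longrightarrow> finite (fsphere X n)"
  by (rule finite_subset[OF _ finite_lists_length_eq[OF finite_letters, of X n]])
    (auto simp: fsphere_def free_words_iff)

lemma finite_followers: "finite X \<Longrightarrow> finite (followers X n a)"
  using finite_fsphere finite_subset followers_subset_fsphere by metis

lemma finite_fball: "finite X \<Longrightarrow> finite (fball X n)"
  by (rule finite_subset[OF _ finite_lists_length_le[OF finite_letters, of X n]])
    (auto simp: fball_def free_words_iff)

lemma fsphere_Suc: "fsphere X (Suc n) = (\<Union>a\<in>letters X. (#) a ` followers X n a)"
proof safe
  fix w assume "w \<in> fsphere X (Suc n)"
  then obtain a v where "w = a # v" "reduced (a # v)" "set (a # v) \<subseteq> letters X" "length v = n"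
    by (cases w) (auto simp: fsphere_def free_words_iff)
  then show "w \<in> (\<Union>a\<in>letters X. (#) a ` followers X n a)"
    by (auto simp: followers_def fsphere_def free_words_iff reduced_Cons)
qed (auto simp: followers_def fsphere_def free_words_iff reduced_Cons)

lemma followers_0: "followers X 0 a = {[]}"
  by (auto simp: followers_def fsphere_def)

lemma followers_Suc: "followers X (Suc n) a = (\<Union>b\<in>next_letters X a. (#) b ` followers X n b)"
proof safe
  fix w assume "w \<in> followers X (Suc n) a"
  then obtain b v where "w = b # v" "reduced (b # v)" "set (b # v) \<subseteq> letters X" "length v = n"
      "\<not> cancels a b"
    by (cases w) (auto simp: followers_def fsphere_def free_words_iff)
  then have "b \<in> next_letters X a" "v \<in> followers X n b"
    by (auto simp: followers_def fsphere_def next_letters_def free_words_iff reduced_Cons)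
  with \<open>w = b # v\<close> show "w \<in> (\<Union>b\<in>next_letters X a. (#) b ` followers X n b)"
    by blast
qed (auto simp: followers_def fsphere_def next_letters_def free_words_iff reduced_Cons)

lemma card_next_letters:
  assumes "finite X" "a \<in> letters X"
  shows "card (next_letters X a) = 2 * card X - 1"
proof -
  have "next_letters X a = letters X - {(\<not> fst a, snd a)}"
    by (auto simp: next_letters_def cancels_iff)
  moreover have "(\<not> fst a, snd a) \<in> letters X"
    using assms(2) by (auto simp: letters_def)
  ultimately show ?thesis
    using assms(1) by (simp add: card_letters finite_letters)
qed

lemma card_followers:
  assumes "finite X"
  shows "a \<in> letters X \<Longrightarrow> card (followers X n a) = (2 * card X - 1) ^ n"
proof (induction n arbitrary: a)
  case (Suc n)
  have next_sub: "next_letters X a \<subseteq> letters X"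
    by (auto simp: next_letters_def)
  then have "finite (next_letters X a)"
    using finite_subset finite_letters[OF assms] by blast
  then have "card (followers X (Suc n) a) = (\<Sum>b\<in>next_letters X a. card ((#) b ` followers X n b))"
    unfolding followers_Suc by (rule card_UN_disjoint) (auto simp: finite_followers assms)
  also have "\<dots> = (\<Sum>b\<in>next_letters X a. (2 * card X - 1) ^ n)"
    using Suc.IH next_sub by (intro sum.cong) (auto simp: card_image)
  finally show ?case
    using card_next_letters[OF assms Suc.prems] by simp
qed (simp add: followers_0)

lemma card_fsphere_Suc:
  assumes "finite X"
  shows "card (fsphere X (Suc n)) = 2 * card X * (2 * card X - 1) ^ n"
proof -
  have "card (fsphere X (Suc n)) = (\<Sum>a\<in>letters X. card ((#) a ` followers X n a))"
    unfolding fsphere_Suc using finite_letters[OF assms]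
    by (rule card_UN_disjoint) (auto simp: finite_followers assms)
  also have "\<dots> = (\<Sum>a\<in>letters X. (2 * card X - 1) ^ n)"
    by (intro sum.cong) (simp_all add: card_image card_followers assms)
  finally show ?thesis
    using assms by (simp add: card_letters)
qed

lemma card_fball_filter:
  assumes "finite X"
  shows "card {w \<in> fball X n. P w} = (\<Sum>s\<le>n. card {w \<in> fsphere X s. P w})"
proof -
  have "{w \<in> fball X n. P w} = (\<Union>s\<le>n. {w \<in> fsphere X s. P w})"
    by (auto simp: fball_def fsphere_def)
  also have "card \<dots> = (\<Sum>s\<le>n. card {w \<in> fsphere X s. P w})"
  proof (rule card_UN_disjoint)
    show "\<forall>s\<in>{..n}. finite {w \<in> fsphere X s. P w}"
      using finite_fsphere[OF assms] by simp
  qed (auto simp: fsphere_def)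
  finally show ?thesis .
qed

lemma card_fball_filter_le:
  assumes "finite X" "0 \<le> \<epsilon>"
    and sphere: "\<And>s. L < s \<Longrightarrow> real (card {w \<in> fsphere X s. P w}) \<le> \<epsilon> * real (card (fsphere X s))"
  shows "real (card {w \<in> fball X n. P w}) \<le> real (card (fball X L)) + \<epsilon> * real (card (fball X n))"
proof -
  let ?S = "\<lambda>s. real (card (fsphere X s))"
  have "real (card {w \<in> fsphere X s. P w}) \<le> (if s \<le> L then ?S s else 0) + \<epsilon> * ?S s" for s
  proof (cases "s \<le> L")
    case True
    have "card {w \<in> fsphere X s. P w} \<le> card (fsphere X s)"
      by (rule card_mono) (simp_all add: finite_fsphere assms(1))
    moreover have "0 \<le> \<epsilon> * ?S s"
      using assms(2) by simp
    ultimately show ?thesis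
      using True by simp
  next
    case False
    then show ?thesis
      using sphere by simp
  qed
  note sphere_le = this
  have "real (card {w \<in> fball X n. P w}) \<le> (\<Sum>s\<le>n. (if s \<le> L then ?S s else 0) + \<epsilon> * ?S s)"
    unfolding card_fball_filter[OF assms(1)] of_nat_sum by (rule sum_mono) (rule sphere_le)
  also have "\<dots> = (\<Sum>s\<le>n. (if s \<le> L then ?S s else 0)) + \<epsilon> * real (card (fball X n))"
    using card_fball_filter[OF assms(1), of n "\<lambda>_. True"] by (simp add: sum.distrib sum_distrib_left)
  finally have "real (card {w \<in> fball X n. P w})
      \<le> (\<Sum>s\<le>n. (if s \<le> L then ?S s else 0)) + \<epsilon> * real (card (fball X n))" .
  moreover have "(\<Sum>s\<le>n. (if s \<le> L then ?S s else 0)) = (\<Sum>s\<in>{s \<in> {..n}. s \<le> L}. ?S s)"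
    by (rule sum.inter_filter[symmetric]) simp
  moreover have "\<dots> \<le> (\<Sum>s\<le>L. ?S s)"
    by (rule sum_mono2) auto
  moreover have "\<dots> = real (card (fball X L))"
    using card_fball_filter[OF assms(1), of L "\<lambda>_. True"] by simp
  ultimately show ?thesis
    by linarith
qed

lemma card_fball_ge:
  assumes "finite X" "X \<noteq> {}"
  shows "Suc n \<le> card (fball X n)"
proof -
  obtain x where "x \<in> X"
    using assms(2) by blast
  then have "(\<lambda>i. replicate i (True, x)) ` {..n} \<subseteq> fball X n"
    by (auto simp: fball_def letters_def intro: replicate_in_free_words)
  then have "card ((\<lambda>i. replicate i (True, x)) ` {..n}) \<le> card (fball X n)"
    by (rule card_mono[OF finite_fball[OF assms(1)]])
  moreover have "inj_on (\<lambda>i. replicate i (True, x)) {..n}"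
    by (auto simp: inj_on_def)
  ultimately show ?thesis
    by (simp add: card_image)
qed

definition fiber_count :: "('a, 'b) monoid_scheme \<Rightarrow> 'a set \<Rightarrow> nat \<Rightarrow> bool \<times> 'a \<Rightarrow> 'a \<Rightarrow> nat" where
  "fiber_count G X n a h = card {w \<in> followers X n a. proj G w = h}"

section \<open>The projection to a group\<close>

locale word_map = group G for G :: "('a, 'b) monoid_scheme" (structure) +
  fixes X :: "'a set"
  assumes finite_gens: "finite X" and gens_closed: "X \<subseteq> carrier G"
begin

lemma letter_val_closed [simp]: "a \<in> letters X \<Longrightarrow> letter_val G a \<in> carrier G"
  using gens_closed by (auto simp: letter_val_def letters_def)

lemma proj_closed [simp]: "set w \<subseteq> letters X \<Longrightarrow> proj G w \<in> carrier G"
  by (induction w) auto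

lemma proj_append:
  "set u \<subseteq> letters X \<Longrightarrow> set v \<subseteq> letters X \<Longrightarrow> proj G (u @ v) = proj G u \<otimes> proj G v"
  by (induction u) (auto simp: m_assoc)

lemma proj_replicate: "a \<in> letters X \<Longrightarrow> proj G (replicate r a) = letter_val G a [^] r"
  by (induction r) (simp_all add: nat_pow_Suc2[symmetric])

lemma proj_replicate_append:
  assumes "a \<in> letters X" "set w \<subseteq> letters X"
  shows "proj G (replicate r a @ w) = letter_val G a [^] r \<otimes> proj G w"
proof -
  have "set (replicate r a) \<subseteq> letters X"
    using assms(1) by auto
  then show ?thesis
    using assms by (simp add: proj_append proj_replicate)
qed

lemma proj_replicate_eq_int_pow:
  assumes "x \<in> X"
  shows "proj G (replicate k (b, x)) = x [^] (if b then int k else - int k)"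
  using proj_replicate[of "(b, x)" k] assms gens_closed
  by (auto simp: letters_def letter_val_def int_pow_int int_pow_neg nat_pow_inv)

lemma proj_push:
  assumes "set w \<subseteq> letters X" "a \<in> letters X"
  shows "proj G (push w a) = proj G w \<otimes> letter_val G a"
proof (cases "w \<noteq> [] \<and> cancels (last w) a")
  case True
  then have w: "w = butlast w @ [last w]" by simp
  have letters: "set (butlast w) \<subseteq> letters X" "last w \<in> letters X"
    using assms True by (auto dest: in_set_butlastD)
  have "letter_val G (last w) \<otimes> letter_val G a = \<one>"
    using True letters(2) gens_closed by (auto simp: cancels_iff letter_val_def letters_def)
  then have "proj G w \<otimes> letter_val G a = proj G (butlast w)"
    using letters assms(2) by (subst w) (simp add: proj_append m_assoc)
  then show ?thesis
    using True by (simp add: push_def)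
next
  case False
  then show ?thesis
    using assms by (auto simp: push_def proj_append)
qed

lemma proj_normalize: "set w \<subseteq> letters X \<Longrightarrow> proj G (normalize w) = proj G w"
proof -
  have "proj G (foldl push u w) = proj G u \<otimes> proj G w" if "set u \<subseteq> letters X" "set w \<subseteq> letters X" for u w
    using that
  proof (induction w arbitrary: u)
    case (Cons a w)
    then have "set (push u a) \<subseteq> letters X"
      using set_push[of u a] by auto
    with Cons show ?case
      by (simp add: proj_push m_assoc)
  qed simp
  then show "set w \<subseteq> letters X \<Longrightarrow> proj G (normalize w) = proj G w"
    by (simp add: normalize_def)
qed

lemma proj_fmult:
  "set u \<subseteq> letters X \<Longrightarrow> set v \<subseteq> letters X \<Longrightarrow> proj G (fmult u v) = proj G u \<otimes> proj G v"
  by (simp add: fmult_def proj_normalize proj_append)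

lemma proj_image_eq_generate: "proj G ` free_words X = generate G X"
proof
  have "proj G w \<in> generate G X" if "set w \<subseteq> letters X" for w
    using that
  proof (induction w)
    case (Cons a w)
    then have "letter_val G a \<in> generate G X"
      by (auto simp: letter_val_def letters_def intro: generate.incl generate.inv)
    with Cons show ?case
      by (auto intro: generate.eng)
  qed (simp add: generate.one)
  then show "proj G ` free_words X \<subseteq> generate G X"
    by (auto simp: free_words_iff)
next
  show "generate G X \<subseteq> proj G ` free_words X"
  proof
    fix g assume "g \<in> generate G X"
    then show "g \<in> proj G ` free_words X"
    proof induction
      case one
      then show ?case by (metis free_words_Nil image_eqI proj_Nil)
    next
      case (incl x)
      then have "[(True, x)] \<in> free_words X"
        by (simp add: free_words_iff letters_def)
      with incl show ?case
        using gens_closed by (force simp: letter_val_def)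
    next
      case (inv x)
      then have "[(False, x)] \<in> free_words X"
        by (simp add: free_words_iff letters_def)
      with inv show ?case
        using gens_closed by (force simp: letter_val_def)
    next
      case (eng g g')
      then obtain w w' where "w \<in> free_words X" "w' \<in> free_words X" "g = proj G w" "g' = proj G w'"
        by blast
      then show ?case
        using normalize_in_free_words[of "w @ w'" X]
        by (intro image_eqI[of _ _ "normalize (w @ w')"]) (auto simp: free_words_iff proj_normalize proj_append)
    qed
  qed
qed

lemma card_kernel_translate_le:
  assumes "\<omega> \<in> free_words X"
  shows "card (proj_kernel G X \<inter> fmult \<omega> ` fball X n) \<le> card {w \<in> fball X n. proj G w = inv (proj G \<omega>)}"
proof -
  have "proj_kernel G X \<inter> fmult \<omega> ` fball X n \<subseteq> fmult \<omega> ` {w \<in> fball X n. proj G w = inv (proj G \<omega>)}"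
  proof
    fix v assume "v \<in> proj_kernel G X \<inter> fmult \<omega> ` fball X n"
    then obtain w where w: "w \<in> fball X n" "v = fmult \<omega> w" "proj G v = \<one>"
      by (auto simp: proj_kernel_def)
    have "set \<omega> \<subseteq> letters X" "set w \<subseteq> letters X"
      using assms w(1) by (auto simp: fball_def free_words_iff)
    with w have "proj G w = inv (proj G \<omega>)"
      using inv_solve_left[of "proj G w" "proj G \<omega>" \<one>] by (simp add: proj_fmult)
    with w show "v \<in> fmult \<omega> ` {w \<in> fball X n. proj G w = inv (proj G \<omega>)}"
      by auto
  qed
  then have "card (proj_kernel G X \<inter> fmult \<omega> ` fball X n)
      \<le> card (fmult \<omega> ` {w \<in> fball X n. proj G w = inv (proj G \<omega>)})"
    by (rule card_mono[rotated]) (simp add: finite_fball finite_gens)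
  also have "\<dots> \<le> card {w \<in> fball X n. proj G w = inv (proj G \<omega>)}"
    by (rule card_image_le) (simp add: finite_fball finite_gens)
  finally show ?thesis .
qed

abbreviation branching :: nat where
  "branching \<equiv> 2 * card X - 1"

lemma fiber_count_le:
  assumes "a \<in> letters X"
  shows "fiber_count G X n a h \<le> branching ^ n"
proof -
  have "fiber_count G X n a h \<le> card (followers X n a)"
    unfolding fiber_count_def by (rule card_mono) (simp_all add: finite_followers finite_gens)
  then show ?thesis
    using card_followers[OF finite_gens assms] by simp
qed

lemma card_fiber_UN_followers:
  assumes "B \<subseteq> letters X" "h \<in> carrier G"
  shows "card {w \<in> (\<Union>b\<in>B. (#) b ` followers X n b). proj G w = h}
    = (\<Sum>b\<in>B. fiber_count G X n b (inv (letter_val G b) \<otimes> h))"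
proof -
  have Cons_fiber: "proj G (b # v) = h \<longleftrightarrow> proj G v = inv (letter_val G b) \<otimes> h"
    if "b \<in> B" "v \<in> followers X n b" for b v
  proof -
    have "set v \<subseteq> letters X"
      using that(2) followers_subset_fsphere set_subset_letters_if_fsphere by blast
    then show ?thesis
      using that(1) assms by (subst inv_solve_left) auto
  qed
  have "{w \<in> (#) b ` followers X n b. proj G w = h}
      = (#) b ` {v \<in> followers X n b. proj G v = inv (letter_val G b) \<otimes> h}" if "b \<in> B" for b
  proof -
    have "{w \<in> (#) b ` followers X n b. proj G w = h} = (#) b ` {v \<in> followers X n b. proj G (b # v) = h}"
      by blast
    also have "{v \<in> followers X n b. proj G (b # v) = h}
        = {v \<in> followers X n b. proj G v = inv (letter_val G b) \<otimes> h}"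
      using Cons_fiber[OF that] by blast
    finally show ?thesis .
  qed
  note per_letter = this
  have "{w \<in> (\<Union>b\<in>B. (#) b ` followers X n b). proj G w = h}
      = (\<Union>b\<in>B. {w \<in> (#) b ` followers X n b. proj G w = h})"
    by blast
  also have "\<dots> = (\<Union>b\<in>B. (#) b ` {v \<in> followers X n b. proj G v = inv (letter_val G b) \<otimes> h})"
    by (rule SUP_cong[OF refl]) (rule per_letter)
  also have "card \<dots> = (\<Sum>b\<in>B. fiber_count G X n b (inv (letter_val G b) \<otimes> h))"
  proof (subst card_UN_disjoint)
    show "finite B"
      using finite_subset[OF assms(1) finite_letters[OF finite_gens]] .
  qed (auto simp: finite_followers finite_gens card_image fiber_count_def)
  finally show ?thesis .
qed

lemma fiber_count_Suc:
  assumes "a \<in> letters X" "h \<in> carrier G"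
  shows "fiber_count G X (Suc n) a h = (\<Sum>b\<in>next_letters X a. fiber_count G X n b (inv (letter_val G b) \<otimes> h))"
  unfolding fiber_count_def[of _ _ "Suc n"] followers_Suc
  using assms by (intro card_fiber_UN_followers) (auto simp: next_letters_def)

lemma card_fsphere_fiber_Suc:
  assumes "h \<in> carrier G"
  shows "card {w \<in> fsphere X (Suc n). proj G w = h} = (\<Sum>a\<in>letters X. fiber_count G X n a (inv (letter_val G a) \<otimes> h))"
  unfolding fsphere_Suc using assms by (intro card_fiber_UN_followers) auto

lemma card_proj_followers_mult_le:
  assumes e: "e \<in> letters X" and h: "h \<in> carrier G"
    and low: "\<And>t. t \<in> followers X j e \<Longrightarrow> c \<le> real (fiber_count G X m (last (e # t)) (inv (proj G t) \<otimes> h))"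
  shows "real (card (proj G ` followers X j e)) * c \<le> real (2 * card X * branching ^ m)"
proof -
  let ?I = "proj G ` followers X j e"
  define rep where "rep g = inv_into (followers X j e) (proj G) g" for g
  define A where "A g = {v \<in> followers X m (last (e # rep g)). proj G v = inv g \<otimes> h}" for g
  have rep: "rep g \<in> followers X j e" "proj G (rep g) = g" if "g \<in> ?I" for g
    using that by (auto simp: rep_def inv_into_into f_inv_into_f)
  have rep_letters: "set (rep g) \<subseteq> letters X" if "g \<in> ?I" for g
    using rep(1)[OF that] followers_subset_fsphere set_subset_letters_if_fsphere by blast
  have "c \<le> real (card (A g))" if "g \<in> ?I" for g
    using low[OF rep(1)[OF that]] rep(2)[OF that] by (simp add: A_def fiber_count_def)
  then have "real (card ?I) * c \<le> (\<Sum>g\<in>?I. real (card (A g)))"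
    using sum_mono[of ?I "\<lambda>_. c"] by (simp add: mult.commute)
  also have "\<dots> = real (card (\<Union>g\<in>?I. A g))"
  proof -
    have "A g \<inter> A g' = {}" if "g \<in> ?I" "g' \<in> ?I" "g \<noteq> g'" for g g'
    proof -
      have "g \<in> carrier G" "g' \<in> carrier G"
        using rep(2) rep_letters that(1,2) proj_closed by metis+
      then have "inv g \<otimes> h \<noteq> inv g' \<otimes> h"
        using that(3) h by (metis inv_closed inv_inv right_cancel)
      then show ?thesis
        by (auto simp: A_def)
    qed
    then show ?thesis
      by (subst card_UN_disjoint) (auto simp: A_def finite_followers finite_gens)
  qed
  also have "\<dots> \<le> real (card (\<Union>a\<in>letters X. followers X m a))"
  proof -
    have "last (e # rep g) \<in> letters X" if "g \<in> ?I" for g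
      using e rep_letters[OF that] by (cases "rep g" rule: rev_cases) auto
    then have "(\<Union>g\<in>?I. A g) \<subseteq> (\<Union>a\<in>letters X. followers X m a)"
      by (auto simp: A_def)
    then show ?thesis
      by (intro of_nat_mono card_mono) (simp_all add: finite_letters finite_followers finite_gens)
  qed
  also have "\<dots> \<le> real (\<Sum>a\<in>letters X. card (followers X m a))"
    by (intro of_nat_mono card_UN_le) (simp add: finite_letters finite_gens)
  also have "\<dots> = real (2 * card X * branching ^ m)"
    by (simp add: card_followers card_letters finite_gens)
  finally show ?thesis .
qed

text \<open>Pad a reduced word on the left with copies of its first letter.\<close>
lemma proj_fball_subset:
  assumes "X \<noteq> {}"
  shows "proj G ` fball X m \<subseteq> (\<lambda>(c, g). inv c \<otimes> g) `
    ((\<Union>a\<in>letters X. range (\<lambda>s::nat. letter_val G a [^] s)) \<times> proj G ` fsphere X m)"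
proof
  fix g assume "g \<in> proj G ` fball X m"
  then obtain w where w: "w \<in> free_words X" "length w \<le> m" "g = proj G w"
    by (auto simp: fball_def)
  obtain a where a: "a \<in> letters X" "w = [] \<or> hd w = a"
  proof (cases w)
    case Nil
    then show ?thesis
      using that assms by (auto simp: letters_def)
  next
    case (Cons b v)
    then show ?thesis
      using w(1) by (intro that[of b]) (auto simp: free_words_iff)
  qed
  define v where "v = replicate (m - length w) a @ w"
  have wl: "reduced w" "set w \<subseteq> letters X"
    using w(1) by (auto simp: free_words_iff)
  then have "v \<in> fsphere X m"
    using a w(2) reduced_replicate_append[OF wl(1) a(2)] by (auto simp: v_def fsphere_def free_words_iff)
  moreover have "proj G v = letter_val G a [^] (m - length w) \<otimes> g"
    using a(1) wl(2) w(3) by (simp add: v_def proj_replicate_append)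
  then have "g = inv (letter_val G a [^] (m - length w)) \<otimes> proj G v"
    using a(1) wl(2) w(3) by (simp add: inv_solve_left)
  ultimately show "g \<in> (\<lambda>(c, g). inv c \<otimes> g) `
      ((\<Union>a\<in>letters X. range (\<lambda>s::nat. letter_val G a [^] s)) \<times> proj G ` fsphere X m)"
    using a(1) by force
qed

lemma finite_image_if_torsion:
  assumes "X \<noteq> {}"
    and torsion: "\<And>x. x \<in> X \<Longrightarrow> \<exists>p>0. x [^] (p::nat) = \<one>"
    and bounded: "\<And>m. card (proj G ` fsphere X m) \<le> M"
  shows "finite (proj G ` free_words X)"
proof -
  define P where "P = (\<Union>a\<in>letters X. range (\<lambda>s::nat. letter_val G a [^] s))"
  have "finite (range (\<lambda>s::nat. letter_val G a [^] s))" if "a \<in> letters X" for a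
  proof -
    have "snd a \<in> X"
      using that by (auto simp: letters_def)
    then obtain p :: nat where p: "0 < p" "snd a [^] p = \<one>"
      using torsion by blast
    then have "letter_val G a [^] p = \<one>"
      using that gens_closed by (auto simp: letter_val_def letters_def nat_pow_inv)
    then show ?thesis
      using p(1) that by (intro finite_range_pow_if_torsion) auto
  qed
  then have "finite P"
    unfolding P_def using finite_letters[OF finite_gens] by blast
  have "finite (\<Union>m. proj G ` fball X m)"
  proof (rule finite_UN_incseq_card_bounded)
    show "incseq (\<lambda>m. proj G ` fball X m)"
      by (auto simp: incseq_def fball_def)
    show "finite (proj G ` fball X m)" for m
      by (simp add: finite_fball finite_gens)
    show "card (proj G ` fball X m) \<le> card P * M" for m
    proof -
      have "card (proj G ` fball X m) \<le> card ((\<lambda>(c, g). inv c \<otimes> g) ` (P \<times> proj G ` fsphere X m))"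
        using \<open>finite P\<close> finite_fsphere[OF finite_gens]
        by (intro card_mono[OF _ proj_fball_subset[OF assms(1), folded P_def]]) auto
      also have "\<dots> \<le> card (P \<times> proj G ` fsphere X m)"
        by (rule card_image_le) (simp add: \<open>finite P\<close> finite_fsphere finite_gens)
      also have "\<dots> \<le> card P * M"
        using bounded by (simp add: card_cartesian_product)
      finally show ?thesis .
    qed
  qed
  moreover have "proj G ` free_words X = (\<Union>m. proj G ` fball X m)"
    by (auto simp: fball_def)
  ultimately show ?thesis
    by simp
qed

text \<open>Pigeonhole on the images of the words x^i y^(n - i), i \<le> n, which all lie in the sphere of
  radius n.\<close>
lemma pow_collision:
  assumes "x \<in> X" "(b, y) \<in> letters X" "y \<noteq> x" "card (proj G ` fsphere X n) \<le> n"
  shows "\<exists>d>0. x [^] d = letter_val G (b, y) [^] (d::nat)"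
proof -
  let ?c = "letter_val G (b, y)"
  have xc: "x \<in> carrier G" "?c \<in> carrier G"
    using assms(1,2) gens_closed by auto
  define f where "f i = x [^] i \<otimes> ?c [^] (n - i)" for i :: nat
  have "f ` {..n} \<subseteq> proj G ` fsphere X n"
  proof
    fix g assume "g \<in> f ` {..n}"
    then obtain i where i: "i \<le> n" "g = f i"
      by auto
    let ?u = "replicate i (True, x) @ replicate (n - i) (b, y)"
    have x_letter: "(True, x) \<in> letters X"
      using assms(1) by (simp add: letters_def)
    have "?u \<in> fsphere X n"
      using i assms reduced_replicate_append[of "[]"] x_letter
      by (auto simp: fsphere_def free_words_iff reduced_append cancels_def)
    moreover have "set (replicate (n - i) (b, y)) \<subseteq> letters X"
      using assms(2) by auto
    then have "proj G ?u = g"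
      using i x_letter assms(2) by (simp add: proj_replicate_append proj_replicate f_def letter_val_def)
    ultimately show "g \<in> proj G ` fsphere X n"
      by blast
  qed
  then have "card (f ` {..n}) \<le> card (proj G ` fsphere X n)"
    by (rule card_mono[OF finite_imageI[OF finite_fsphere[OF finite_gens]]])
  then have "\<not> inj_on f {..n}"
    using assms(4) card_image[of f "{..n}"] by auto
  then obtain i j where "i \<le> n" "j \<le> n" "i \<noteq> j" "f i = f j"
    by (auto simp: inj_on_def)
  then obtain i j where ij: "i < j" "j \<le> n" "f i = f j"
    by (cases "i < j") (auto simp: not_less_iff_gr_or_eq)
  define d where "d = j - i"
  have "?c [^] d \<otimes> ?c [^] (n - j) = ?c [^] (n - i)" "x [^] i \<otimes> x [^] d = x [^] j"
    using ij nat_pow_mult[OF xc(2), of d "n - j"] nat_pow_mult[OF xc(1), of i d] by (simp_all add: d_def)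
  then have "x [^] i \<otimes> (?c [^] d \<otimes> ?c [^] (n - j)) = x [^] i \<otimes> x [^] d \<otimes> ?c [^] (n - j)"
    using ij(3) by (simp add: f_def)
  then have "x [^] i \<otimes> (?c [^] d \<otimes> ?c [^] (n - j)) = x [^] i \<otimes> (x [^] d \<otimes> ?c [^] (n - j))"
    using xc by (simp add: m_assoc)
  then have "x [^] d = ?c [^] d"
    using xc by simp
  then show ?thesis
    using ij(1) d_def by (intro exI[of _ d]) auto
qed

lemma torsion_if_fsphere_images_bounded:
  assumes "x \<in> X" "y \<in> X" "y \<noteq> x" "\<And>m. card (proj G ` fsphere X m) \<le> M"
  shows "\<exists>p>0. x [^] (p::nat) = \<one>"
proof -
  have c: "x \<in> carrier G" "y \<in> carrier G"
    using assms(1,2) gens_closed by auto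
  obtain d :: nat where d: "0 < d" "x [^] d = y [^] d"
    using pow_collision[of x True y M] assms by (auto simp: letters_def letter_val_def)
  obtain d' :: nat where d': "0 < d'" "x [^] d' = inv y [^] d'"
    using pow_collision[of x False y M] assms by (auto simp: letters_def letter_val_def)
  have "x [^] (d * d') = y [^] (d * d')"
    using d c by (simp flip: nat_pow_pow)
  moreover have "x [^] (d * d') = inv (y [^] (d * d'))"
    using d' c by (simp add: mult.commute[of d] nat_pow_inv flip: nat_pow_pow)
  ultimately have "x [^] (d * d') \<otimes> x [^] (d * d') = y [^] (d * d') \<otimes> inv (y [^] (d * d'))"
    by (rule arg_cong2)
  then have "x [^] (d * d') \<otimes> x [^] (d * d') = \<one>"
    using c by simp
  then have "x [^] (d * d' + d * d') = \<one>"
    using c by (simp add: nat_pow_mult)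
  then show ?thesis
    using d(1) d'(1) by (intro exI[of _ "d * d' + d * d'"]) auto
qed

text \<open>Prefix y or its inverse, whichever does not cancel the first letter.\<close>
lemma card_proj_fsphere_le_followers:
  assumes "e \<in> letters X" "y \<in> X" "y \<noteq> snd e"
  shows "card (proj G ` fsphere X m) \<le> 2 * card (proj G ` followers X (Suc m) e)"
proof -
  let ?V = "proj G ` followers X (Suc m) e"
  have cover: "proj G ` fsphere X m \<subseteq> (\<lambda>(b, g). inv (letter_val G (b, y)) \<otimes> g) ` (UNIV \<times> ?V)"
  proof
    fix g assume "g \<in> proj G ` fsphere X m"
    then obtain w where w: "w \<in> fsphere X m" "g = proj G w"
      by auto
    define b where "b = (w = [] \<or> hd w \<noteq> (False, y))"
    have "w = [] \<or> \<not> cancels (b, y) (hd w)"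
      by (cases "w \<noteq> [] \<and> hd w = (False, y)") (auto simp: b_def cancels_iff)
    then have "(b, y) # w \<in> followers X (Suc m) e"
      using w(1) assms by (auto simp: followers_def fsphere_def free_words_iff reduced_Cons
          cancels_iff letters_def)
    moreover have "g = inv (letter_val G (b, y)) \<otimes> proj G ((b, y) # w)"
      using w assms(2) gens_closed set_subset_letters_if_fsphere[OF w(1)]
      by (simp add: m_assoc[symmetric] letters_def)
    ultimately show "g \<in> (\<lambda>(b, g). inv (letter_val G (b, y)) \<otimes> g) ` (UNIV \<times> ?V)"
      by force
  qed
  have "card (proj G ` fsphere X m) \<le> card ((UNIV :: bool set) \<times> ?V)"
    by (rule surj_card_le[OF _ cover]) (simp add: finite_followers finite_gens)
  then show ?thesis
    by (simp add: card_cartesian_product)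
qed

end

section \<open>Groups with infinite image\<close>

locale infinite_word_map = word_map +
  assumes infinite_image: "infinite (proj G ` free_words X)"
begin

lemma gens_nonempty: "X \<noteq> {}"
proof
  assume "X = {}"
  then have "free_words X = {[]}"
    by (auto simp: free_words_def)
  with infinite_image show False
    by simp
qed

lemma followers_image_unbounded:
  assumes "2 \<le> card X" "e \<in> letters X"
  shows "\<exists>n. N < card (proj G ` followers X n e)"
proof (rule ccontr)
  assume "\<not> ?thesis"
  then have bounded: "card (proj G ` followers X n e) \<le> N" for n
    by (simp add: not_less)
  have other: "\<exists>y\<in>X. y \<noteq> x" for x
  proof (rule ccontr)
    assume "\<not> (\<exists>y\<in>X. y \<noteq> x)"
    then have "card X \<le> card {x}"
      by (intro card_mono) auto
    with assms(1) show False
      by simp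
  qed
  obtain y where "y \<in> X" "y \<noteq> snd e"
    using other by blast
  then have spheres: "card (proj G ` fsphere X m) \<le> 2 * N" for m
    using card_proj_fsphere_le_followers[OF assms(2)] bounded by (meson le_trans mult_le_mono2)
  have "\<exists>p>0. x [^] (p::nat) = \<one>" if "x \<in> X" for x
    using other[of x] torsion_if_fsphere_images_bounded[OF that _ _ spheres] by blast
  then have "finite (proj G ` free_words X)"
    using finite_image_if_torsion[OF gens_nonempty _ spheres] by blast
  with infinite_image show False ..
qed

lemma branching_pos: "0 < branching"
proof -
  have "0 < card X"
    using gens_nonempty finite_gens by (simp add: card_gt_0_iff)
  then show ?thesis
    by simp
qed

definition fiber_peak :: "nat \<Rightarrow> real" where
  "fiber_peak n = Max ((\<lambda>(a, h). real (fiber_count G X n a h) / real branching ^ n) ` (letters X \<times> carrier G))"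

lemma finite_fiber_ratios:
  "finite ((\<lambda>(a, h). real (fiber_count G X n a h) / real branching ^ n) ` (letters X \<times> carrier G))"
proof (rule finite_subset)
  show "(\<lambda>(a, h). real (fiber_count G X n a h) / real branching ^ n) ` (letters X \<times> carrier G)
      \<subseteq> (\<lambda>i. real i / real branching ^ n) ` {..branching ^ n}"
    using fiber_count_le by fastforce
qed simp

lemma fiber_count_le_peak:
  assumes "a \<in> letters X" "h \<in> carrier G"
  shows "real (fiber_count G X n a h) \<le> fiber_peak n * real branching ^ n"
proof -
  have "real (fiber_count G X n a h) / real branching ^ n \<le> fiber_peak n"
    unfolding fiber_peak_def using assms by (intro Max_ge[OF finite_fiber_ratios]) force
  then show ?thesis
    using branching_pos by (simp add: divide_le_eq)
qed

lemma fiber_peak_attained: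
  "\<exists>a\<in>letters X. \<exists>h\<in>carrier G. real (fiber_count G X n a h) = fiber_peak n * real branching ^ n"
proof -
  have "letters X \<times> carrier G \<noteq> {}"
    using gens_nonempty by (auto simp: letters_def)
  then have "fiber_peak n \<in> (\<lambda>(a, h). real (fiber_count G X n a h) / real branching ^ n) ` (letters X \<times> carrier G)"
    unfolding fiber_peak_def by (intro Max_in finite_fiber_ratios) simp
  then obtain a h where "a \<in> letters X" "h \<in> carrier G"
    and "fiber_peak n = real (fiber_count G X n a h) / real branching ^ n"
    by auto
  moreover have "0 < real branching ^ n"
    using branching_pos by simp
  ultimately show ?thesis
    by auto
qed

lemma fiber_peak_nonneg: "0 \<le> fiber_peak n"
proof -
  obtain a h where "real (fiber_count G X n a h) = fiber_peak n * real branching ^ n"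
    using fiber_peak_attained by blast
  then have "0 * real branching ^ n \<le> fiber_peak n * real branching ^ n"
    by simp
  moreover have "0 < real branching ^ n"
    using branching_pos by simp
  ultimately show ?thesis
    by (simp only: mult_le_cancel_right_pos)
qed

lemma fiber_peak_Suc_le: "fiber_peak (Suc n) \<le> fiber_peak n"
proof -
  obtain a h where a: "a \<in> letters X" "h \<in> carrier G"
    and peak: "real (fiber_count G X (Suc n) a h) = fiber_peak (Suc n) * real branching ^ Suc n"
    using fiber_peak_attained by blast
  have "real (fiber_count G X (Suc n) a h)
      = (\<Sum>b\<in>next_letters X a. real (fiber_count G X n b (inv (letter_val G b) \<otimes> h)))"
    using fiber_count_Suc[OF a] by simp
  also have "\<dots> \<le> (\<Sum>b\<in>next_letters X a. fiber_peak n * real branching ^ n)"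
    using a by (intro sum_mono fiber_count_le_peak) (auto simp: next_letters_def)
  also have "\<dots> = fiber_peak n * real branching ^ Suc n"
    using card_next_letters[OF finite_gens a(1)] by simp
  finally show ?thesis
    using peak branching_pos by simp
qed

lemma fiber_count_step_back:
  assumes "e \<in> letters X" "h \<in> carrier G" "b \<in> next_letters X e"
    and bound: "\<And>a h. a \<in> letters X \<Longrightarrow> h \<in> carrier G
      \<Longrightarrow> real (fiber_count G X n a h) \<le> U * real branching ^ n"
    and near: "(U - \<gamma>) * real branching ^ Suc n \<le> real (fiber_count G X (Suc n) e h)"
  shows "(U - real branching * \<gamma>) * real branching ^ n
    \<le> real (fiber_count G X n b (inv (letter_val G b) \<otimes> h))"
proof -
  let ?f = "\<lambda>b'. real (fiber_count G X n b' (inv (letter_val G b') \<otimes> h))"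
  let ?Q = "real branching ^ n"
  have "U * ?Q - real branching * \<gamma> * ?Q \<le> ?f b"
  proof (rule sum_near_max_imp_term_ge[where f = ?f and B = "next_letters X e"])
    show "finite (next_letters X e)"
      using finite_subset[OF _ finite_letters[OF finite_gens]] by (auto simp: next_letters_def)
    show "?f b' \<le> U * ?Q" if "b' \<in> next_letters X e" for b'
      using that assms(2) by (intro bound) (auto simp: next_letters_def)
    show "real (card (next_letters X e)) * (U * ?Q) - real branching * \<gamma> * ?Q
        \<le> (\<Sum>b'\<in>next_letters X e. ?f b')"
      using near fiber_count_Suc[OF assms(1,2), of n] card_next_letters[OF finite_gens assms(1)]
      by (simp add: algebra_simps)
  qed (rule assms(3))
  then show ?thesis
    by (simp add: algebra_simps)
qed

lemma fiber_count_backward: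
  assumes bound: "\<And>n a h. m \<le> n \<Longrightarrow> a \<in> letters X \<Longrightarrow> h \<in> carrier G
      \<Longrightarrow> real (fiber_count G X n a h) \<le> U * real branching ^ n"
  shows "e \<in> letters X \<Longrightarrow> h \<in> carrier G
    \<Longrightarrow> (U - \<gamma>) * real branching ^ (m + j) \<le> real (fiber_count G X (m + j) e h)
    \<Longrightarrow> t \<in> followers X j e
    \<Longrightarrow> (U - real branching ^ j * \<gamma>) * real branching ^ m
      \<le> real (fiber_count G X m (last (e # t)) (inv (proj G t) \<otimes> h))"
proof (induction j arbitrary: e h \<gamma> t)
  case 0
  then show ?case
    by (simp add: followers_0)
next
  case (Suc j)
  obtain b t' where t: "t = b # t'" "b \<in> next_letters X e" "t' \<in> followers X j b"
    using Suc.prems(4) unfolding followers_Suc by blast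
  have b: "b \<in> letters X"
    using t(2) by (simp add: next_letters_def)
  let ?h = "inv (letter_val G b) \<otimes> h"
  have "(U - real branching * \<gamma>) * real branching ^ (m + j) \<le> real (fiber_count G X (m + j) b ?h)"
    using Suc.prems(3) by (intro fiber_count_step_back[OF Suc.prems(1,2) t(2)] bound) auto
  from Suc.IH[OF b _ this t(3)] have
    "(U - real branching ^ j * (real branching * \<gamma>)) * real branching ^ m
      \<le> real (fiber_count G X m (last (b # t')) (inv (proj G t') \<otimes> ?h))"
    using b Suc.prems(2) by simp
  moreover have "set t' \<subseteq> letters X"
    using t(3) followers_subset_fsphere set_subset_letters_if_fsphere by blast
  then have "inv (proj G t) \<otimes> h = inv (proj G t') \<otimes> ?h"
    using b Suc.prems(2) by (simp add: t(1) inv_mult_group m_assoc)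
  ultimately show ?case
    using t(1) by (simp add: mult.assoc mult.left_commute)
qed

lemma card_proj_followers_le_if_near_bound:
  assumes "0 < \<delta>" "0 \<le> \<eta>" "real branching ^ j * \<eta> \<le> \<delta> / 2"
    and e: "e \<in> letters X" "h \<in> carrier G"
    and bound: "\<And>n a h. m \<le> n \<Longrightarrow> a \<in> letters X \<Longrightarrow> h \<in> carrier G
      \<Longrightarrow> real (fiber_count G X n a h) \<le> (\<delta> + \<eta>) * real branching ^ n"
    and start: "\<delta> * real branching ^ (m + j) \<le> real (fiber_count G X (m + j) e h)"
  shows "real (card (proj G ` followers X j e)) \<le> 4 * real (card X) / \<delta>"
proof -
  have "((\<delta> + \<eta>) - \<eta>) * real branching ^ (m + j) \<le> real (fiber_count G X (m + j) e h)"
    using start by simp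
  note backward = fiber_count_backward[OF _ e this]
  have "\<delta> / 2 * real branching ^ m \<le> real (fiber_count G X m (last (e # t)) (inv (proj G t) \<otimes> h))"
    if "t \<in> followers X j e" for t
  proof -
    have "\<delta> / 2 * real branching ^ m \<le> ((\<delta> + \<eta>) - real branching ^ j * \<eta>) * real branching ^ m"
      using assms(2,3) by (intro mult_right_mono) auto
    also have "\<dots> \<le> real (fiber_count G X m (last (e # t)) (inv (proj G t) \<otimes> h))"
      by (rule backward[OF _ that]) (rule bound)
    finally show ?thesis .
  qed
  then have "real (card (proj G ` followers X j e)) * (\<delta> / 2 * real branching ^ m)
      \<le> real (2 * card X * branching ^ m)"
    by (rule card_proj_followers_mult_le[OF e])
  then show ?thesis
    using branching_pos assms(1) by (simp add: field_simps)
qed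

lemma followers_images_bounded_if_peak_limit_pos:
  assumes lim: "fiber_peak \<longlonglongrightarrow> \<delta>" and above: "\<And>n. \<delta> \<le> fiber_peak n" and "0 < \<delta>"
  shows "\<exists>e\<in>letters X. \<forall>j\<le>J. real (card (proj G ` followers X j e)) \<le> 4 * real (card X) / \<delta>"
proof -
  define \<eta> where "\<eta> = \<delta> / (2 * real branching ^ J)"
  have "0 < \<eta>"
    using \<open>0 < \<delta>\<close> branching_pos by (simp add: \<eta>_def)
  then obtain n0 where n0: "\<And>n. n0 \<le> n \<Longrightarrow> fiber_peak n < \<delta> + \<eta>"
    using order_tendstoD(2)[OF lim, of "\<delta> + \<eta>"] by (auto simp: eventually_sequentially)
  obtain e h where e: "e \<in> letters X" "h \<in> carrier G"
    and peak: "real (fiber_count G X (n0 + J) e h) = fiber_peak (n0 + J) * real branching ^ (n0 + J)"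
    using fiber_peak_attained by blast
  have "real (card (proj G ` followers X j e)) \<le> 4 * real (card X) / \<delta>" if jJ: "j \<le> J" for j
  proof (rule card_proj_followers_le_if_near_bound[OF \<open>0 < \<delta>\<close> _ _ e, where m = "n0 + J - j"])
    show "0 \<le> \<eta>"
      using \<open>0 < \<eta>\<close> by simp
    have "real branching ^ j * \<eta> \<le> real branching ^ J * \<eta>"
      using jJ branching_pos \<open>0 < \<eta>\<close> by (intro mult_right_mono power_increasing) auto
    also have "\<dots> = \<delta> / 2"
      using branching_pos by (simp add: \<eta>_def)
    finally show "real branching ^ j * \<eta> \<le> \<delta> / 2" .
    show "real (fiber_count G X n a h') \<le> (\<delta> + \<eta>) * real branching ^ n"
      if "n0 + J - j \<le> n" "a \<in> letters X" "h' \<in> carrier G" for n a h'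
    proof -
      have "n0 \<le> n"
        using that(1) jJ by linarith
      then have "fiber_peak n * real branching ^ n \<le> (\<delta> + \<eta>) * real branching ^ n"
        using n0[of n] branching_pos by (intro mult_right_mono) auto
      then show ?thesis
        using fiber_count_le_peak[OF that(2,3), of n] by linarith
    qed
    show "\<delta> * real branching ^ (n0 + J - j + j) \<le> real (fiber_count G X (n0 + J - j + j) e h)"
      using peak above[of "n0 + J"] jJ branching_pos by (simp add: mult_right_mono)
  qed
  with e show ?thesis
    by blast
qed

lemma fiber_peak_tendsto_0:
  assumes "2 \<le> card X"
  shows "fiber_peak \<longlonglongrightarrow> 0"
proof -
  have "decseq fiber_peak"
    by (rule decseq_SucI) (rule fiber_peak_Suc_le)
  then obtain \<delta> where lim: "fiber_peak \<longlonglongrightarrow> \<delta>" and above: "\<And>n. \<delta> \<le> fiber_peak n"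
    using decseq_convergent[of fiber_peak 0] fiber_peak_nonneg by blast
  have "\<delta> = 0"
  proof (rule ccontr)
    assume "\<delta> \<noteq> 0"
    moreover have "0 \<le> \<delta>"
      using lim fiber_peak_nonneg by (intro LIMSEQ_le_const) auto
    ultimately have "0 < \<delta>"
      by simp
    define B where "B = nat \<lceil>4 * real (card X) / \<delta>\<rceil>"
    have "\<forall>a\<in>letters X. \<exists>j. B < card (proj G ` followers X j a)"
      using followers_image_unbounded[OF assms] by blast
    then obtain j where j: "\<And>a. a \<in> letters X \<Longrightarrow> B < card (proj G ` followers X (j a) a)"
      by metis
    obtain e where e: "e \<in> letters X"
      and bounded: "\<And>j'. j' \<le> Max (j ` letters X)
        \<Longrightarrow> real (card (proj G ` followers X j' e)) \<le> 4 * real (card X) / \<delta>"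
      using followers_images_bounded_if_peak_limit_pos[OF lim above \<open>0 < \<delta>\<close>] by blast
    have "j e \<le> Max (j ` letters X)"
      using e finite_letters[OF finite_gens] by simp
    then have "real (card (proj G ` followers X (j e) e)) \<le> real B"
      using bounded real_nat_ceiling_ge order_trans unfolding B_def by blast
    with j[OF e] show False
      by simp
  qed
  with lim show ?thesis
    by simp
qed

lemma card_fsphere_fiber_le_peak:
  assumes "h \<in> carrier G"
  shows "real (card {w \<in> fsphere X (Suc m). proj G w = h}) \<le> fiber_peak m * real (card (fsphere X (Suc m)))"
proof -
  have "real (card {w \<in> fsphere X (Suc m). proj G w = h})
      = (\<Sum>a\<in>letters X. real (fiber_count G X m a (inv (letter_val G a) \<otimes> h)))"
    unfolding card_fsphere_fiber_Suc[OF assms] by simp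
  also have "\<dots> \<le> (\<Sum>a\<in>letters X. fiber_peak m * real branching ^ m)"
    using assms by (intro sum_mono fiber_count_le_peak) auto
  also have "\<dots> = fiber_peak m * real (card (fsphere X (Suc m)))"
    unfolding card_fsphere_Suc[OF finite_gens] by (simp add: card_letters finite_gens)
  finally show ?thesis .
qed

lemma fball_fiber_le:
  assumes "2 \<le> card X" "0 < \<epsilon>"
  obtains L where "\<And>n h. h \<in> carrier G \<Longrightarrow>
    real (card {w \<in> fball X n. proj G w = h}) \<le> real (card (fball X L)) + \<epsilon> * real (card (fball X n))"
proof -
  obtain L where L: "\<And>n. L \<le> n \<Longrightarrow> fiber_peak n < \<epsilon>"
    using order_tendstoD(2)[OF fiber_peak_tendsto_0[OF assms(1)] assms(2)]
    by (auto simp: eventually_sequentially)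
  have sphere: "real (card {w \<in> fsphere X s. proj G w = h}) \<le> \<epsilon> * real (card (fsphere X s))"
    if h: "h \<in> carrier G" and s: "L < s" for h s
  proof -
    obtain m where m: "s = Suc m" "L \<le> m"
      using s by (cases s) auto
    have "fiber_peak m * real (card (fsphere X s)) \<le> \<epsilon> * real (card (fsphere X s))"
      using L[OF m(2)] by (intro mult_right_mono) auto
    with card_fsphere_fiber_le_peak[OF h, of m] m(1) show ?thesis
      by simp
  qed
  show thesis
  proof (rule that)
    fix n h assume h: "h \<in> carrier G"
    show "real (card {w \<in> fball X n. proj G w = h}) \<le> real (card (fball X L)) + \<epsilon> * real (card (fball X n))"
    proof (rule card_fball_filter_le[OF finite_gens])
      show "0 \<le> \<epsilon>"
        using assms(2) by simp
      show "real (card {w \<in> fsphere X s. proj G w = h}) \<le> \<epsilon> * real (card (fsphere X s))" if "L < s" for s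
        using sphere[OF h that] .
    qed
  qed
qed

lemma proj_inj_on_free_words_singleton:
  assumes "X = {x}"
  shows "inj_on (proj G) (free_words X)"
proof
  fix w w' assume w: "w \<in> free_words X" "w' \<in> free_words X" and eq: "proj G w = proj G w'"
  have x: "x \<in> X" "x \<in> carrier G"
    using assms gens_closed by auto
  have "infinite (carrier (subgroup_generated G {x}))"
    using infinite_image[unfolded proj_image_eq_generate] assms x(2) by (simp add: carrier_subgroup_generated)
  then have pow_inj: "x [^] i = x [^] k \<Longrightarrow> i = k" for i k :: int
    using infinite_cyclic_subgroup_int[OF x(2)] by blast
  obtain b k b' k' where w_eq: "w = replicate k (b, x)" and w'_eq: "w' = replicate k' (b', x)"
    using w free_words_singleton assms by metis
  then have "x [^] (if b then int k else - int k) = x [^] (if b' then int k' else - int k')"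
    using eq proj_replicate_eq_int_pow[OF x(1)] by simp
  then have "(if b then int k else - int k) = (if b' then int k' else - int k')"
    by (rule pow_inj)
  then have "k = k' \<and> (k = 0 \<or> b = b')"
    by (cases b; cases b') auto
  then show "w = w'"
    using w_eq w'_eq by auto
qed

lemma card_fball_fiber_le_1_if_singleton:
  assumes "X = {x}"
  shows "card {w \<in> fball X n. proj G w = h} \<le> 1"
proof -
  have "inj_on (proj G) {w \<in> fball X n. proj G w = h}"
    using proj_inj_on_free_words_singleton[OF assms] by (rule inj_on_subset) (auto simp: fball_def)
  then have "card {w \<in> fball X n. proj G w = h} = card (proj G ` {w \<in> fball X n. proj G w = h})"
    by (rule card_image[symmetric])
  also have "\<dots> \<le> card {h}"
    by (rule card_mono) auto
  finally show ?thesis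
    by simp
qed

lemma card_fball_tendsto_infinity: "filterlim (\<lambda>n. real (card (fball X n))) at_top sequentially"
proof (rule filterlim_at_top_mono[OF filterlim_real_sequentially])
  show "eventually (\<lambda>n. real n \<le> real (card (fball X n))) sequentially"
    using card_fball_ge[OF finite_gens gens_nonempty] by (simp add: Suc_le_eq less_imp_le)
qed

lemma fball_fiber_density_small:
  assumes "0 < \<epsilon>"
  shows "eventually (\<lambda>n. \<forall>h\<in>carrier G.
    real (card {w \<in> fball X n. proj G w = h}) \<le> \<epsilon> * real (card (fball X n))) sequentially"
proof -
  obtain C where C: "\<And>n h. h \<in> carrier G \<Longrightarrow>
      real (card {w \<in> fball X n. proj G w = h}) \<le> C + \<epsilon> / 2 * real (card (fball X n))"
  proof (cases "2 \<le> card X")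
    case True
    then show ?thesis
      using fball_fiber_le[OF True half_gt_zero[OF assms]] that by blast
  next
    case False
    moreover have "0 < card X"
      using gens_nonempty finite_gens by (simp add: card_gt_0_iff)
    ultimately have "card X = 1"
      by linarith
    then obtain x where X: "X = {x}"
      by (rule card_1_singletonE)
    show ?thesis
    proof (rule that[of 1])
      fix n h
      have "real (card {w \<in> fball X n. proj G w = h}) \<le> 1"
        using card_fball_fiber_le_1_if_singleton[OF X, of n h] by simp
      moreover have "0 \<le> \<epsilon> / 2 * real (card (fball X n))"
        using assms by simp
      ultimately show "real (card {w \<in> fball X n. proj G w = h}) \<le> 1 + \<epsilon> / 2 * real (card (fball X n))"
        by linarith
    qed
  qed
  have "eventually (\<lambda>n. 2 / \<epsilon> * C \<le> real (card (fball X n))) sequentially"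
    using card_fball_tendsto_infinity by (simp add: filterlim_at_top)
  then show ?thesis
  proof (rule eventually_mono)
    fix n assume "2 / \<epsilon> * C \<le> real (card (fball X n))"
    then have C_le: "2 * C \<le> \<epsilon> * real (card (fball X n))"
      using assms by (simp add: field_simps)
    show "\<forall>h\<in>carrier G. real (card {w \<in> fball X n. proj G w = h}) \<le> \<epsilon> * real (card (fball X n))"
    proof
      fix h assume "h \<in> carrier G"
      then have "2 * real (card {w \<in> fball X n. proj G w = h}) \<le> 2 * C + \<epsilon> * real (card (fball X n))"
        using C[of h n] by (simp add: field_simps)
      with C_le show "real (card {w \<in> fball X n. proj G w = h}) \<le> \<epsilon> * real (card (fball X n))"
        by linarith
    qed
  qed
qed

lemma kernel_translates_density_le:
  assumes "\<forall>h\<in>carrier G. real (card {w \<in> fball X n. proj G w = h}) \<le> \<epsilon> * real (card (fball X n))"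
  shows "(SUP \<omega>\<in>free_words X. ereal (real (card (proj_kernel G X \<inter> fmult \<omega> ` fball X n))
    / real (card (fball X n)))) \<le> ereal \<epsilon>"
proof (rule SUP_least)
  fix \<omega> assume \<omega>: "\<omega> \<in> free_words X"
  then have "inv (proj G \<omega>) \<in> carrier G"
    by (simp add: free_words_iff)
  then have "real (card {w \<in> fball X n. proj G w = inv (proj G \<omega>)}) \<le> \<epsilon> * real (card (fball X n))"
    using assms by blast
  then have "real (card (proj_kernel G X \<inter> fmult \<omega> ` fball X n)) \<le> \<epsilon> * real (card (fball X n))"
    using card_kernel_translate_le[OF \<omega>, of n] by linarith
  moreover have "0 < real (card (fball X n))"
    using card_fball_ge[OF finite_gens gens_nonempty, of n] by simp
  ultimately show "ereal (real (card (proj_kernel G X \<inter> fmult \<omega> ` fball X n)) / real (card (fball X n)))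
      \<le> ereal \<epsilon>"
    by (simp add: divide_le_eq)
qed

end

theorem theorem2p5:
  fixes G :: "('a, 'b) monoid_scheme" and X :: "'a set"
  assumes "group G"
    and "infinite (carrier G)"
    and "finite X"
    and "X \<subseteq> carrier G"
    and "generate G X = carrier G"
  shows "upper_density X (proj_kernel G X) = 0"
proof -
  interpret word_map G X
    using assms(1,3,4) by (simp add: word_map_def word_map_axioms_def)
  interpret infinite_word_map G X
    using assms(2,5) by unfold_locales (simp add: proj_image_eq_generate)
  show ?thesis
    unfolding upper_density_def
  proof (rule limsup_eq_0_if_eventually_le)
    show "0 \<le> (SUP \<omega>\<in>free_words X. ereal (real (card (proj_kernel G X \<inter> fmult \<omega> ` fball X n))
        / real (card (fball X n))))" for n
      by (rule SUP_upper2[of "[]"]) auto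
    show "eventually (\<lambda>n. (SUP \<omega>\<in>free_words X. ereal (real (card (proj_kernel G X \<inter> fmult \<omega> ` fball X n))
        / real (card (fball X n)))) \<le> ereal \<epsilon>) sequentially" if "0 < \<epsilon>" for \<epsilon>
      using fball_fiber_density_small[OF that] by (rule eventually_mono) (rule kernel_translates_density_le)
  qed
qed

end
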